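(* Let $G=(V,E)$ be an undirected graph with positive edge weights, and let $p,v\in V$ be distinct. If a minimum $p,v$-cut $S$ with $v\in S$ (and $p\notin S$) satisfies $|E(\{v\},V\setminus S)|>0.6\deg(v)$, then for all $v'\in S\setminus\{v\}$ we have $\lambda_{p,v'}\le 0.8\,\lambda_{p,v}$.
   Context: $|E(A,B)|$ is the total weight of edges between node sets $A$ and $B$; $\deg(u)$ is the total weight of edges incident to $u$; $\lambda_{x,y}$ denotes the value (total weight of crossing edges) of a minimum $x,y$-cut in $G$. *)

theory Defs
  imports Complex_Main
begin

text \<open>A finite undirected graph with positive edge weights on vertex set V is
represented by a symmetric weight function w: the edge {u,x} exists iff w u x > 0,
and its weight is w u x.\<close>

definition weighted_graph :: "'a set \<Rightarrow> ('a \<Rightarrow> 'a \<Rightarrow> real) \<Rightarrow> bool" where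
  "weighted_graph V w \<longleftrightarrow> finite V
     \<and> (\<forall>u x. w u x = w x u)
     \<and> (\<forall>u x. w u x \<ge> 0)
     \<and> (\<forall>u. w u u = 0)
     \<and> (\<forall>u x. w u x \<noteq> 0 \<longrightarrow> u \<in> V \<and> x \<in> V)"

definition edge_weight :: "('a \<Rightarrow> 'a \<Rightarrow> real) \<Rightarrow> 'a set \<Rightarrow> 'a set \<Rightarrow> real" where
  "edge_weight w A B = (\<Sum>a\<in>A. \<Sum>b\<in>B. w a b)"

definition deg :: "'a set \<Rightarrow> ('a \<Rightarrow> 'a \<Rightarrow> real) \<Rightarrow> 'a \<Rightarrow> real" where
  "deg V w u = (\<Sum>x\<in>V. w u x)"

definition cut_value :: "'a set \<Rightarrow> ('a \<Rightarrow> 'a \<Rightarrow> real) \<Rightarrow> 'a set \<Rightarrow> real" where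
  "cut_value V w S = edge_weight w S (V - S)"

definition xy_cuts :: "'a set \<Rightarrow> 'a \<Rightarrow> 'a \<Rightarrow> 'a set set" where
  "xy_cuts V x y = {S. S \<subseteq> V \<and> y \<in> S \<and> x \<notin> S}"

definition min_cut_value :: "'a set \<Rightarrow> ('a \<Rightarrow> 'a \<Rightarrow> real) \<Rightarrow> 'a \<Rightarrow> 'a \<Rightarrow> real" where
  "min_cut_value V w x y = Min (cut_value V w ` xy_cuts V x y)"

definition is_min_cut :: "'a set \<Rightarrow> ('a \<Rightarrow> 'a \<Rightarrow> real) \<Rightarrow> 'a \<Rightarrow> 'a \<Rightarrow> 'a set \<Rightarrow> bool" where
  "is_min_cut V w x y S \<longleftrightarrow> S \<in> xy_cuts V x y \<and> cut_value V w S = min_cut_value V w x y"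

end

theory Submission
  imports Defs
begin

text \<open>Let \<open>a\<close> and \<open>b\<close> be the weights of the edges from \<open>v\<close> to \<open>V - S\<close> and to \<open>S - {v}\<close>,
so that \<open>deg v = a + b\<close>. Moving \<open>v\<close> out of \<open>S\<close> gives a \<open>p,v'\<close>-cut of value \<open>\<lambda> - a + b\<close>,
where \<open>\<lambda> = \<lambda>\<^sub>p\<^sub>,\<^sub>v\<close>. The trivial cut \<open>{v}\<close> gives \<open>\<lambda> \<le> a + b\<close>, and \<open>a > 0.6 (a + b)\<close>
means \<open>b < 2a/3\<close>; together these yield \<open>\<lambda> - a + b \<le> 0.8 \<lambda>\<close>.\<close>

lemma edge_weight_Un_left:
  assumes "finite A" "finite B" "A \<inter> B = {}"
  shows "edge_weight w (A \<union> B) C = edge_weight w A C + edge_weight w B C"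
  unfolding edge_weight_def using assms by (rule sum.union_disjoint)

lemma edge_weight_Un_right:
  assumes "finite B" "finite C" "B \<inter> C = {}"
  shows "edge_weight w A (B \<union> C) = edge_weight w A B + edge_weight w A C"
  unfolding edge_weight_def using assms by (simp add: sum.union_disjoint sum.distrib)

lemma edge_weight_commute:
  assumes "\<And>u x. w u x = w x u"
  shows "edge_weight w A B = edge_weight w B A"
  unfolding edge_weight_def by (subst sum.swap) (simp add: assms)

lemma finite_xy_cuts: "finite V \<Longrightarrow> finite (xy_cuts V x y)"
  by (rule finite_subset[of _ "Pow V"]) (auto simp: xy_cuts_def)

lemma min_cut_value_le_cut_value:
  assumes "finite V" "T \<in> xy_cuts V x y"
  shows "min_cut_value V w x y \<le> cut_value V w T"
  unfolding min_cut_value_def using assms by (intro Min_le) (auto simp: finite_xy_cuts)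

lemma cut_value_singleton:
  assumes "weighted_graph V w" "v \<in> V"
  shows "cut_value V w {v} = deg V w v"
proof -
  have "deg V w v = w v v + (\<Sum>x\<in>V - {v}. w v x)"
    unfolding deg_def using assms by (simp add: weighted_graph_def sum.remove)
  then show ?thesis
    using assms by (simp add: cut_value_def edge_weight_def weighted_graph_def)
qed

lemma deg_split_by_cut:
  assumes "weighted_graph V w" "S \<subseteq> V" "v \<in> S"
  shows "deg V w v = edge_weight w {v} (V - S) + edge_weight w {v} (S - {v})"
proof -
  have fin: "finite V" using assms(1) by (simp add: weighted_graph_def)
  have V: "V = (V - S) \<union> (S - {v}) \<union> {v}" using assms(2,3) by auto
  have "deg V w v = edge_weight w {v} ((V - S) \<union> (S - {v}) \<union> {v})"
    unfolding deg_def edge_weight_def using V by simp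
  also have "\<dots> = edge_weight w {v} ((V - S) \<union> (S - {v})) + edge_weight w {v} {v}"
    using fin assms(2,3) by (intro edge_weight_Un_right) (auto intro: finite_subset)
  also have "\<dots> = edge_weight w {v} (V - S) + edge_weight w {v} (S - {v}) + w v v"
    using fin assms(2)
    by (subst edge_weight_Un_right) (auto intro: finite_subset simp: edge_weight_def)
  finally show ?thesis using assms(1) by (simp add: weighted_graph_def)
qed

lemma cut_value_remove_vertex:
  assumes "weighted_graph V w" "S \<subseteq> V" "v \<in> S"
  shows "cut_value V w (S - {v})
           = cut_value V w S - edge_weight w {v} (V - S) + edge_weight w {v} (S - {v})"
proof -
  have fin: "finite V" and sym: "\<And>u x. w u x = w x u"
    using assms(1) by (auto simp: weighted_graph_def)
  have finS: "finite S" using fin assms(2) by (rule finite_subset[rotated])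
  have S: "S = (S - {v}) \<union> {v}" and VS: "V - (S - {v}) = (V - S) \<union> {v}"
    using assms(2,3) by auto
  have "cut_value V w S = edge_weight w ((S - {v}) \<union> {v}) (V - S)"
    unfolding cut_value_def using S by simp
  also have "\<dots> = edge_weight w (S - {v}) (V - S) + edge_weight w {v} (V - S)"
    using finS by (intro edge_weight_Un_left) auto
  finally have "cut_value V w S = edge_weight w (S - {v}) (V - S) + edge_weight w {v} (V - S)" .
  moreover have "cut_value V w (S - {v})
                   = edge_weight w (S - {v}) (V - S) + edge_weight w (S - {v}) {v}"
    unfolding cut_value_def VS using fin assms(3) by (intro edge_weight_Un_right) auto
  moreover have "edge_weight w (S - {v}) {v} = edge_weight w {v} (S - {v})"
    using sym by (rule edge_weight_commute)
  ultimately show ?thesis by simp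
qed

theorem lemma4p4:
  fixes V :: "'a set" and w :: "'a \<Rightarrow> 'a \<Rightarrow> real" and p v :: 'a and S :: "'a set"
  assumes "weighted_graph V w"
    and "p \<in> V" and "v \<in> V" and "p \<noteq> v"
    and "is_min_cut V w p v S"
    and "edge_weight w {v} (V - S) > 0.6 * deg V w v"
  shows "\<forall>v' \<in> S - {v}. min_cut_value V w p v' \<le> 0.8 * min_cut_value V w p v"
proof
  fix v' assume v': "v' \<in> S - {v}"
  have fin: "finite V" using assms(1) by (simp add: weighted_graph_def)
  have S: "S \<subseteq> V" "v \<in> S" "p \<notin> S" and \<lambda>: "cut_value V w S = min_cut_value V w p v"
    using assms(5) by (auto simp: is_min_cut_def xy_cuts_def)
  have "{v} \<in> xy_cuts V p v" using assms(3,4) by (auto simp: xy_cuts_def)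
  then have "min_cut_value V w p v \<le> deg V w v"
    using min_cut_value_le_cut_value[OF fin] cut_value_singleton[OF assms(1,3)] by metis
  moreover have "min_cut_value V w p v' \<le> cut_value V w (S - {v})"
    using v' S by (intro min_cut_value_le_cut_value[OF fin]) (auto simp: xy_cuts_def)
  ultimately show "min_cut_value V w p v' \<le> 0.8 * min_cut_value V w p v"
    using assms(1,6) S \<lambda> by (simp add: cut_value_remove_vertex deg_split_by_cut)
qed

end
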